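(* Let $\alpha\in(0,1)$, let $A\subset\mathbb R$ be bounded, and let $f:A\to\mathbb R$ be uniformly continuous with $V_\alpha(f,A)<\infty$. Then $\lambda(\overline{f(A)})=0$.
   Context: $\lambda$ denotes Lebesgue measure on $\mathbb R$. $V_\alpha(f,A)$ is the supremum of $\sum_{i=1}^m|f(b_i)-f(a_i)|^\alpha$ over all finite collections of non-overlapping intervals $[a_i,b_i]$ with $a_i,b_i\in A$. *)

theory Defs
  imports "HOL-Analysis.Analysis"
begin

definition nonoverlapping_in :: "real set \<Rightarrow> (real \<times> real) list \<Rightarrow> bool" where
  "nonoverlapping_in A ps \<longleftrightarrow>
     (\<forall>i<length ps. fst (ps!i) \<in> A \<and> snd (ps!i) \<in> A \<and> fst (ps!i) \<le> snd (ps!i)) \<and>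
     (\<forall>i<length ps. \<forall>j<length ps. i \<noteq> j \<longrightarrow>
        snd (ps!i) \<le> fst (ps!j) \<or> snd (ps!j) \<le> fst (ps!i))"

definition V_alpha :: "real \<Rightarrow> (real \<Rightarrow> real) \<Rightarrow> real set \<Rightarrow> ereal" where
  "V_alpha \<alpha> f A = (SUP ps \<in> {ps. nonoverlapping_in A ps}.
      ereal (\<Sum>i<length ps. \<bar>f (snd (ps!i)) - f (fst (ps!i))\<bar> powr \<alpha>))"

end

theory Submission
  imports Defs
begin

text \<open>Fix \<open>\<delta> > 0\<close> and cut \<open>A\<close> into finitely many cells of a grid so fine that \<open>f\<close> oscillates
  by less than \<open>\<delta>\<close> on each cell. In each cell, \<open>f\<close> takes two values \<open>f a, f b\<close> such that the image
  of the cell lies in an interval of length \<open>4 \<bar>f b - f a\<bar>\<close>. The intervals spanned by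
  \<open>a\<close> and \<open>b\<close> in distinct cells do not overlap, and \<open>t \<le> t^\<alpha> \<delta>^(1-\<alpha>)\<close> for \<open>0 \<le> t \<le> \<delta>\<close>, so the closure of \<open>f(A)\<close> is covered
  by intervals of total length at most \<open>4 \<delta>^(1-\<alpha>) V\<^sub>\<alpha>(f, A)\<close>, which tends to \<open>0\<close> with \<open>\<delta>\<close>.\<close>

lemma V_alpha_ge_sum:
  assumes "nonoverlapping_in A ps"
  shows "ereal (\<Sum>i<length ps. \<bar>f (snd (ps!i)) - f (fst (ps!i))\<bar> powr \<alpha>) \<le> V_alpha \<alpha> f A"
  unfolding V_alpha_def using assms by (intro SUP_upper) auto

lemma V_alpha_ge_sum_ordered:
  fixes K :: "'k::linorder set" and a b :: "'k \<Rightarrow> real"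
  assumes "finite K"
    and endpoints: "\<And>k. k \<in> K \<Longrightarrow> a k \<in> A \<and> b k \<in> A \<and> a k \<le> b k"
    and ordered: "\<And>k k'. k \<in> K \<Longrightarrow> k' \<in> K \<Longrightarrow> k < k' \<Longrightarrow> b k \<le> a k'"
  shows "ereal (\<Sum>k\<in>K. \<bar>f (b k) - f (a k)\<bar> powr \<alpha>) \<le> V_alpha \<alpha> f A"
proof -
  define ks where "ks = sorted_list_of_set K"
  define ps where "ps = map (\<lambda>k. (a k, b k)) ks"
  have set_ks: "set ks = K" and distinct_ks: "distinct ks"
    using \<open>finite K\<close> by (auto simp: ks_def)
  have "nonoverlapping_in A ps"
    unfolding nonoverlapping_in_def
  proof (intro conjI allI impI)
    fix i assume "i < length ps"
    then show "fst (ps!i) \<in> A" "snd (ps!i) \<in> A" "fst (ps!i) \<le> snd (ps!i)"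
      using endpoints set_ks nth_mem by (auto simp: ps_def)
  next
    fix i j assume ij: "i < length ps" "j < length ps" "i \<noteq> j"
    then have "ks!i \<noteq> ks!j" "ks!i \<in> K" "ks!j \<in> K"
      using distinct_ks set_ks nth_mem by (auto simp: ps_def nth_eq_iff_index_eq)
    then show "snd (ps!i) \<le> fst (ps!j) \<or> snd (ps!j) \<le> fst (ps!i)"
      using ordered ij by (cases "ks!i < ks!j") (auto simp: ps_def not_less less_le)
  qed
  then have "ereal (\<Sum>i<length ps. \<bar>f (snd (ps!i)) - f (fst (ps!i))\<bar> powr \<alpha>) \<le> V_alpha \<alpha> f A"
    by (rule V_alpha_ge_sum)
  moreover have "(\<Sum>i<length ps. \<bar>f (snd (ps!i)) - f (fst (ps!i))\<bar> powr \<alpha>)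
      = sum_list (map (\<lambda>k. \<bar>f (b k) - f (a k)\<bar> powr \<alpha>) ks)"
    by (simp add: ps_def sum_list_sum_nth lessThan_atLeast0)
  also have "\<dots> = (\<Sum>k\<in>K. \<bar>f (b k) - f (a k)\<bar> powr \<alpha>)"
    using distinct_ks set_ks by (simp add: sum_list_distinct_conv_sum_set)
  ultimately show ?thesis
    by simp
qed

lemma V_alpha_ge_sum_cells:
  fixes cell :: "real \<Rightarrow> 'k::linorder"
  assumes "finite K"
    and cells_ordered: "\<And>x y. cell x < cell y \<Longrightarrow> x < y"
    and pairs: "\<And>k. k \<in> K \<Longrightarrow> a k \<in> A \<and> b k \<in> A \<and> cell (a k) = k \<and> cell (b k) = k"
  shows "ereal (\<Sum>k\<in>K. \<bar>f (b k) - f (a k)\<bar> powr \<alpha>) \<le> V_alpha \<alpha> f A"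
proof -
  have "ereal (\<Sum>k\<in>K. \<bar>f (max (a k) (b k)) - f (min (a k) (b k))\<bar> powr \<alpha>) \<le> V_alpha \<alpha> f A"
  proof (rule V_alpha_ge_sum_ordered[OF \<open>finite K\<close>])
    fix k k' assume "k \<in> K" "k' \<in> K" "k < k'"
    then show "max (a k) (b k) \<le> min (a k') (b k')"
      using pairs cells_ordered by (simp add: less_imp_le)
  qed (use pairs in \<open>auto simp: min_def max_def\<close>)
  also have "(\<Sum>k\<in>K. \<bar>f (max (a k) (b k)) - f (min (a k) (b k))\<bar> powr \<alpha>)
      = (\<Sum>k\<in>K. \<bar>f (b k) - f (a k)\<bar> powr \<alpha>)"
    by (intro sum.cong) (auto simp: min_def max_def abs_minus_commute)
  finally show ?thesis .
qed

lemma le_powr_mult_powr_one_minus: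
  fixes t \<delta> \<alpha> :: real
  assumes "0 \<le> t" "t \<le> \<delta>" "\<alpha> \<le> 1"
  shows "t \<le> t powr \<alpha> * \<delta> powr (1 - \<alpha>)"
proof (cases "t = 0")
  case False
  then have "t = t powr \<alpha> * t powr (1 - \<alpha>)"
    using assms by (simp add: powr_add[symmetric])
  also have "\<dots> \<le> t powr \<alpha> * \<delta> powr (1 - \<alpha>)"
    using assms by (intro mult_left_mono powr_mono2) auto
  finally show ?thesis .
qed simp

lemma bounded_subset_cball_twice_dist:
  fixes T :: "'a::metric_space set"
  assumes "bounded T" "u \<in> T"
  shows "\<exists>v\<in>T. T \<subseteq> cball u (2 * dist u v)"
proof -
  define r where "r = Sup (dist u ` T)"
  obtain e where "\<And>y. y \<in> T \<Longrightarrow> dist u y \<le> e"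
    using \<open>bounded T\<close> bounded_any_center by metis
  then have "bdd_above (dist u ` T)"
    by (rule bdd_aboveI2)
  then have T_cball: "T \<subseteq> cball u r"
    unfolding r_def by (simp add: subset_iff cSup_upper)
  show ?thesis
  proof (cases "r > 0")
    case True
    then obtain v where "v \<in> T" "r / 2 < dist u v"
      using less_cSupD[of "dist u ` T" "r / 2"] \<open>u \<in> T\<close> by (auto simp: r_def)
    then show ?thesis
      using T_cball by (intro bexI[of _ v]) auto
  next
    case False
    then show ?thesis
      using T_cball subset_cball[of r 0 u] \<open>u \<in> T\<close> by (intro bexI[of _ u]) auto
  qed
qed

lemma emeasure_closure_le_sum_cball:
  fixes T :: "real set" and c r :: "'k \<Rightarrow> real"
  assumes "finite K" "T \<subseteq> (\<Union>k\<in>K. cball (c k) (r k))" "\<And>k. k \<in> K \<Longrightarrow> 0 \<le> r k"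
  shows "emeasure lborel (closure T) \<le> ennreal (\<Sum>k\<in>K. 2 * r k)"
proof -
  have closed_cover: "closed (\<Union>k\<in>K. cball (c k) (r k))"
    using assms(1) by (intro closed_UN) auto
  then have "closure T \<subseteq> (\<Union>k\<in>K. cball (c k) (r k))"
    using assms(2) by (intro closure_minimal)
  then have "emeasure lborel (closure T) \<le> emeasure lborel (\<Union>k\<in>K. cball (c k) (r k))"
    using closed_cover by (intro emeasure_mono) auto
  also have "\<dots> \<le> (\<Sum>k\<in>K. emeasure lborel (cball (c k) (r k)))"
    using assms(1) by (intro emeasure_subadditive_finite) auto
  also have "\<dots> = (\<Sum>k\<in>K. ennreal (2 * r k))"
    using assms(3) by (intro sum.cong) (auto simp: cball_eq_atLeastAtMost)
  also have "\<dots> = ennreal (\<Sum>k\<in>K. 2 * r k)"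
    using assms(3) by (intro sum_ennreal) auto
  finally show ?thesis .
qed

lemma cball_cover_by_cell_pairs:
  fixes f :: "'a \<Rightarrow> 'b::metric_space" and cell :: "'a \<Rightarrow> 'k"
  assumes "\<And>k. k \<in> cell ` A \<Longrightarrow> bounded (f ` {x \<in> A. cell x = k})"
  obtains a b where "\<And>k. k \<in> cell ` A \<Longrightarrow> a k \<in> A \<and> b k \<in> A \<and> cell (a k) = k \<and> cell (b k) = k"
    and "f ` A \<subseteq> (\<Union>k\<in>cell ` A. cball (f (a k)) (2 * dist (f (a k)) (f (b k))))"
proof -
  define a where "a = inv_into A cell"
  have a: "a k \<in> A" "cell (a k) = k" if "k \<in> cell ` A" for k
    using that by (auto simp: a_def inv_into_into f_inv_into_f)
  have "\<forall>k\<in>cell ` A. \<exists>b. b \<in> {x \<in> A. cell x = k} \<and>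
      f ` {x \<in> A. cell x = k} \<subseteq> cball (f (a k)) (2 * dist (f (a k)) (f b))"
  proof
    fix k assume "k \<in> cell ` A"
    then show "\<exists>b. b \<in> {x \<in> A. cell x = k} \<and>
        f ` {x \<in> A. cell x = k} \<subseteq> cball (f (a k)) (2 * dist (f (a k)) (f b))"
      using bounded_subset_cball_twice_dist[OF assms, of k "f (a k)"] a by blast
  qed
  from bchoice[OF this] obtain b where b: "\<And>k. k \<in> cell ` A \<Longrightarrow> b k \<in> {x \<in> A. cell x = k} \<and>
      f ` {x \<in> A. cell x = k} \<subseteq> cball (f (a k)) (2 * dist (f (a k)) (f (b k)))"
    by blast
  have "f ` A \<subseteq> (\<Union>k\<in>cell ` A. cball (f (a k)) (2 * dist (f (a k)) (f (b k))))"
  proof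
    fix z assume "z \<in> f ` A"
    then obtain x where "x \<in> A" "z = f x"
      by blast
    then have "cell x \<in> cell ` A" "z \<in> cball (f (a (cell x))) (2 * dist (f (a (cell x))) (f (b (cell x))))"
      using b[of "cell x"] by auto
    then show "z \<in> (\<Union>k\<in>cell ` A. cball (f (a k)) (2 * dist (f (a k)) (f (b k))))"
      by blast
  qed
  then show thesis
    using a b by (intro that) auto
qed

lemma finite_floor_divide_image:
  fixes A :: "real set"
  assumes "bounded A"
  shows "finite ((\<lambda>x. \<lfloor>x / \<eta>\<rfloor>) ` A)"
proof -
  obtain R where R: "\<And>x. x \<in> A \<Longrightarrow> \<bar>x\<bar> \<le> R"
    using assms by (auto simp: bounded_iff)
  have "(\<lambda>x. \<lfloor>x / \<eta>\<rfloor>) ` A \<subseteq> {- \<lceil>R / \<bar>\<eta>\<bar>\<rceil> .. \<lceil>R / \<bar>\<eta>\<bar>\<rceil>}"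
  proof (clarsimp)
    fix x assume "x \<in> A"
    then have "\<bar>x / \<eta>\<bar> \<le> R / \<bar>\<eta>\<bar>"
      using R by (simp add: abs_divide divide_right_mono)
    then show "- \<lceil>R / \<bar>\<eta>\<bar>\<rceil> \<le> \<lfloor>x / \<eta>\<rfloor> \<and> \<lfloor>x / \<eta>\<rfloor> \<le> \<lceil>R / \<bar>\<eta>\<bar>\<rceil>"
      by linarith
  qed
  then show ?thesis
    using finite_subset by blast
qed

lemma uniformly_continuous_on_grid_cells:
  fixes f :: "real \<Rightarrow> real"
  assumes "bounded A" "uniformly_continuous_on A f" "0 < \<delta>"
  obtains cell :: "real \<Rightarrow> int"
  where "finite (cell ` A)"
    and "\<And>x y. cell x < cell y \<Longrightarrow> x < y"
    and "\<And>x y. x \<in> A \<Longrightarrow> y \<in> A \<Longrightarrow> cell x = cell y \<Longrightarrow> \<bar>f y - f x\<bar> < \<delta>"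
proof -
  obtain \<eta> where "\<eta> > 0"
    and uc: "\<And>x y. x \<in> A \<Longrightarrow> y \<in> A \<Longrightarrow> dist y x < \<eta> \<Longrightarrow> dist (f y) (f x) < \<delta>"
    using assms(2,3) unfolding uniformly_continuous_on_def by metis
  define cell where "cell x = \<lfloor>x / \<eta>\<rfloor>" for x
  have "\<bar>f y - f x\<bar> < \<delta>" if "x \<in> A" "y \<in> A" "cell x = cell y" for x y
  proof -
    have "\<bar>y / \<eta> - x / \<eta>\<bar> < 1"
      using floor_eq_imp_diff_1 that(3) by (metis cell_def)
    then have "dist y x < \<eta>"
      using \<open>\<eta> > 0\<close> by (simp add: dist_real_def diff_divide_distrib[symmetric])
    then show ?thesis
      using uc that by (simp add: dist_real_def)
  qed
  moreover have "x < y" if "cell x < cell y" for x y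
    using floor_less_cancel[OF that[unfolded cell_def]] \<open>\<eta> > 0\<close> by (simp add: divide_less_cancel)
  moreover have "finite (cell ` A)"
    using finite_floor_divide_image[OF assms(1)] by (simp add: cell_def)
  ultimately show thesis
    using that by blast
qed

lemma emeasure_closure_image_le:
  fixes f :: "real \<Rightarrow> real"
  assumes "bounded A" "uniformly_continuous_on A f" "V_alpha \<alpha> f A \<le> ereal M"
    and "\<alpha> \<le> 1" "0 < \<delta>"
  shows "emeasure lborel (closure (f ` A)) \<le> ennreal (4 * \<delta> powr (1 - \<alpha>) * M)"
proof -
  obtain cell :: "real \<Rightarrow> int" where "finite (cell ` A)"
    and cells_ordered: "\<And>x y. cell x < cell y \<Longrightarrow> x < y"
    and osc: "\<And>x y. x \<in> A \<Longrightarrow> y \<in> A \<Longrightarrow> cell x = cell y \<Longrightarrow> \<bar>f y - f x\<bar> < \<delta>"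
    using uniformly_continuous_on_grid_cells[OF assms(1,2,5)] by blast
  define K where "K = cell ` A"
  have "finite K"
    using \<open>finite (cell ` A)\<close> by (simp add: K_def)
  have "bounded (f ` {x \<in> A. cell x = k})" if "k \<in> K" for k
  proof -
    obtain x0 where "x0 \<in> A" "cell x0 = k"
      using \<open>k \<in> K\<close> unfolding K_def by blast
    then have "f ` {x \<in> A. cell x = k} \<subseteq> cball (f x0) \<delta>"
      using osc by (auto simp: dist_real_def less_imp_le)
    then show ?thesis
      using bounded_cball bounded_subset by blast
  qed
  then obtain a b where ab: "\<And>k. k \<in> K \<Longrightarrow> a k \<in> A \<and> b k \<in> A \<and> cell (a k) = k \<and> cell (b k) = k"
    and cover: "f ` A \<subseteq> (\<Union>k\<in>K. cball (f (a k)) (2 * dist (f (a k)) (f (b k))))"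
    using cball_cover_by_cell_pairs[of cell A f] unfolding K_def by blast
  define t where "t k = \<bar>f (b k) - f (a k)\<bar>" for k
  have "ereal (\<Sum>k\<in>K. t k powr \<alpha>) \<le> ereal M"
    using V_alpha_ge_sum_cells[OF \<open>finite K\<close> cells_ordered ab] assms(3) unfolding t_def
    by (rule order_trans)
  then have sum_le: "(\<Sum>k\<in>K. t k powr \<alpha>) \<le> M"
    by simp
  have "f ` A \<subseteq> (\<Union>k\<in>K. cball (f (a k)) (2 * t k))"
    using cover by (simp add: t_def dist_real_def abs_minus_commute)
  then have "emeasure lborel (closure (f ` A)) \<le> ennreal (\<Sum>k\<in>K. 2 * (2 * t k))"
    by (rule emeasure_closure_le_sum_cball[OF \<open>finite K\<close>]) (simp add: t_def)
  also have "\<dots> \<le> ennreal (4 * \<delta> powr (1 - \<alpha>) * M)"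
  proof (rule ennreal_leI)
    have "(\<Sum>k\<in>K. 2 * (2 * t k)) \<le> (\<Sum>k\<in>K. 4 * (t k powr \<alpha> * \<delta> powr (1 - \<alpha>)))"
      using le_powr_mult_powr_one_minus osc ab \<open>\<alpha> \<le> 1\<close>
      by (intro sum_mono) (simp add: t_def less_imp_le)
    also have "\<dots> = 4 * \<delta> powr (1 - \<alpha>) * (\<Sum>k\<in>K. t k powr \<alpha>)"
      by (simp add: sum_distrib_left mult_ac)
    also have "\<dots> \<le> 4 * \<delta> powr (1 - \<alpha>) * M"
      using sum_le by (intro mult_left_mono) auto
    finally show "(\<Sum>k\<in>K. 2 * (2 * t k)) \<le> 4 * \<delta> powr (1 - \<alpha>) * M" .
  qed
  finally show ?thesis .
qed

theorem lemma2p2: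
  fixes \<alpha> :: real and A :: "real set" and f :: "real \<Rightarrow> real"
  assumes "0 < \<alpha>" and "\<alpha> < 1"
    and "bounded A"
    and "uniformly_continuous_on A f"
    and "V_alpha \<alpha> f A < \<infinity>"
  shows "emeasure lebesgue (closure (f ` A)) = 0"
proof -
  obtain M where "V_alpha \<alpha> f A \<le> ereal M" "0 \<le> M"
    using assms(5) by (cases "V_alpha \<alpha> f A") (auto, meson max.cobounded1 max.cobounded2)
  have small: "emeasure lborel (closure (f ` A)) \<le> ennreal e" if "0 < e" for e
  proof -
    define \<delta> where "\<delta> = (e / (4 * M + 1)) powr (1 / (1 - \<alpha>))"
    have \<delta>_powr: "\<delta> powr (1 - \<alpha>) = e / (4 * M + 1)"
      using \<open>0 < e\<close> \<open>0 \<le> M\<close> \<open>\<alpha> < 1\<close> by (simp add: \<delta>_def powr_powr)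
    have "0 < \<delta>"
      using \<open>0 < e\<close> \<open>0 \<le> M\<close> by (simp add: \<delta>_def)
    then have "emeasure lborel (closure (f ` A)) \<le> ennreal (4 * \<delta> powr (1 - \<alpha>) * M)"
      using emeasure_closure_image_le[OF assms(3,4) \<open>V_alpha \<alpha> f A \<le> ereal M\<close>] \<open>\<alpha> < 1\<close>
      by simp
    also have "\<dots> \<le> ennreal e"
      using \<open>0 < e\<close> \<open>0 \<le> M\<close> by (intro ennreal_leI) (simp add: \<delta>_powr field_simps)
    finally show ?thesis .
  qed
  have "emeasure lborel (closure (f ` A)) \<le> 0"
    by (rule ennreal_le_epsilon) (simp add: small)
  then show ?thesis
    by (simp add: borel_closed)
qed

end
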